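(* Let $M\geq 1$, $P=4M-3$, and let $x\in\ell(\mathbb{Z}_P)$ satisfy $x[p]=0$ for all $p=M,\ldots,4M-4$. Then for all $p=1,\ldots,2M-2$, $$\operatorname{CirAut}(x+Rx)[p]=\begin{cases}\displaystyle 2\operatorname{Re}\Big(\sum_{p'=\frac{p+1}{2}}^{M-1}x[p']\big(\overline{x[p'-p]}+\overline{x[p-p']}\big)\Big) & \text{if } p \text{ is odd},\\[2ex] \displaystyle 2\operatorname{Re}\Big(\sum_{p'=\frac{p}{2}+1}^{M-1}x[p']\big(\overline{x[p'-p]}+\overline{x[p-p']}\big)\Big)+\big|x[\tfrac{p}{2}]\big|^2 & \text{if } p \text{ is even},\end{cases}$$ where indices of $x$ are interpreted modulo $P$.
   Context: $\ell(\mathbb{Z}_P)$ denotes the space of $P$-periodic functions $u\colon\mathbb{Z}\to\mathbb{C}$, with inner product $\langle u,v\rangle=\sum_{p\in\mathbb{Z}_P}u[p]\overline{v[p]}$. The translation operator is $(T^pu)[p']:=u[p'-p]$ and the reversal operator is $(Ru)[p]:=u[-p]$. The circular autocorrelation is $\operatorname{CirAut}(u)[p]:=\langle u,T^pu\rangle=\sum_{p'\in\mathbb{Z}_P}u[p']\overline{u[p'-p]}$. *)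

theory Defs
  imports Complex_Main
begin

text \<open>Elements of l(Z_P) are represented as functions int => complex that are P-periodic.
  Sums over Z_P are taken over the representatives {0..<P}.\<close>

definition periodic_fun :: "nat \<Rightarrow> (int \<Rightarrow> complex) \<Rightarrow> bool" where
  "periodic_fun P u \<longleftrightarrow> (\<forall>p. u (p + int P) = u p)"

definition inner_ZP :: "nat \<Rightarrow> (int \<Rightarrow> complex) \<Rightarrow> (int \<Rightarrow> complex) \<Rightarrow> complex" where
  "inner_ZP P u v = (\<Sum>p\<in>{0..<int P}. u p * cnj (v p))"

definition transl :: "int \<Rightarrow> (int \<Rightarrow> complex) \<Rightarrow> (int \<Rightarrow> complex)" where
  "transl p u = (\<lambda>p'. u (p' - p))"

definition reversal :: "(int \<Rightarrow> complex) \<Rightarrow> (int \<Rightarrow> complex)" where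
  "reversal u = (\<lambda>p. u (- p))"

definition CirAut :: "nat \<Rightarrow> (int \<Rightarrow> complex) \<Rightarrow> int \<Rightarrow> complex" where
  "CirAut P u p = inner_ZP P u (transl p u)"

end

theory Submission
  imports Defs
begin

text \<open>With \<open>N = 2M - 2\<close> we have \<open>P = 2N + 1\<close>, so the circular autocorrelation may be summed over the
  window \<open>[-N, N]\<close>. There, every product that can be nonzero only involves values of \<open>x\<close> at
  arguments of modulus at most \<open>3M - 3\<close>, where \<open>x\<close> agrees with its truncation \<open>z\<close> to \<open>[0, M - 1]\<close>;
  so the circular autocorrelation of \<open>x + Rx\<close> is the aperiodic one of \<open>z + Rz\<close>. Expanding the
  product, one cross term vanishes, two terms are the autocorrelation of \<open>z\<close> and its conjugate,
  and the remaining one is the convolution \<open>\<Sum>q. z q * cnj (z (p - q))\<close>, which is folded about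
  \<open>p/2\<close> into a sum plus its conjugate and, for even \<open>p\<close>, the central term \<open>|z (p/2)|^2\<close>.\<close>

lemma sum_eq_if_vanishes_outside:
  assumes "finite I" "finite J" "S \<subseteq> I \<inter> J" "\<And>q. q \<in> I \<union> J \<Longrightarrow> q \<notin> S \<Longrightarrow> f q = 0"
  shows "sum f I = sum f J"
  by (rule sum.same_carrierI[where C = "I \<union> J"]) (use assms in auto)

lemma sum_reflect_atLeastAtMost:
  fixes f :: "int \<Rightarrow> 'a::comm_monoid_add"
  shows "(\<Sum>q\<in>{a..b}. f q) = (\<Sum>q\<in>{p - b..p - a}. f (p - q))"
  by (rule sum.reindex_bij_witness[of _ "\<lambda>q. p - q" "\<lambda>q. p - q"]) auto

lemma sum_periodic_window:
  fixes g :: "int \<Rightarrow> 'a::cancel_comm_monoid_add"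
  assumes periodic: "\<And>q. g (q + int P) = g q"
  shows "(\<Sum>q\<in>{a..<a + int P}. g q) = (\<Sum>q\<in>{0..<int P}. g q)"
proof -
  have shift: "(\<Sum>q\<in>{b + 1..<b + 1 + int P}. g q) = (\<Sum>q\<in>{b..<b + int P}. g q)" for b
  proof -
    have "g b + (\<Sum>q\<in>{b + 1..<b + 1 + int P}. g q) = (\<Sum>q\<in>insert b {b + 1..<b + 1 + int P}. g q)"
      by simp
    also have "insert b {b + 1..<b + 1 + int P} = insert (b + int P) {b..<b + int P}"
      by auto
    also have "(\<Sum>q\<in>\<dots>. g q) = g b + (\<Sum>q\<in>{b..<b + int P}. g q)"
      using periodic by simp
    finally show ?thesis by simp
  qed
  show ?thesis
  proof (induction a rule: int_induct[where k = 0])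
    case (step1 i) then show ?case using shift[of i] by simp
  next
    case (step2 i) then show ?case using shift[of "i - 1"] by simp
  qed simp
qed

lemma sum_atLeastAtMost_reflect_pairs:
  fixes f :: "int \<Rightarrow> 'a::comm_monoid_add"
  assumes "0 \<le> p"
  shows "(\<Sum>q\<in>{0..p}. f q) =
    (\<Sum>q\<in>{p div 2 + 1..p}. f q + f (p - q)) + (if even p then f (p div 2) else 0)"
proof -
  define k where "k = p div 2"
  have k: "0 \<le> k" "k \<le> p" "p - k \<le> k + 1" "p - k = (if even p then k else k + 1)"
    using assms unfolding k_def by auto
  have "{0..p} = {0..p - k - 1} \<union> {p - k..k} \<union> {k + 1..p}"
    using k by auto
  then have "(\<Sum>q\<in>{0..p}. f q) =
      (\<Sum>q\<in>{0..p - k - 1}. f q) + (\<Sum>q\<in>{p - k..k}. f q) + (\<Sum>q\<in>{k + 1..p}. f q)"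
    using k by (simp add: sum.union_disjoint)
  also have "(\<Sum>q\<in>{0..p - k - 1}. f q) = (\<Sum>q\<in>{k + 1..p}. f (p - q))"
    by (subst sum_reflect_atLeastAtMost[where p = p]) simp
  also have "(\<Sum>q\<in>{p - k..k}. f q) = (if even p then f k else 0)"
    using k(4) by simp
  finally show ?thesis
    unfolding k_def by (simp add: sum.distrib algebra_simps)
qed

lemma periodic_fun_diff: "periodic_fun P u \<Longrightarrow> u (q - int P) = u q"
  unfolding periodic_fun_def by (metis diff_add_cancel)

lemma periodic_fun_add_reversal:
  assumes "periodic_fun P x"
  shows "periodic_fun P (\<lambda>q. x q + reversal x q)"
  using assms periodic_fun_diff[OF assms, of "- _"]
  unfolding periodic_fun_def reversal_def by (simp add: algebra_simps)

lemma CirAut_eq_window_sum: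
  assumes "periodic_fun P u"
  shows "CirAut P u p = (\<Sum>q\<in>{a..<a + int P}. u q * cnj (u (q - p)))"
proof -
  have "u (q + int P) * cnj (u (q + int P - p)) = u q * cnj (u (q - p))" for q
    using assms unfolding periodic_fun_def by (metis add_diff_eq diff_add_eq)
  then show ?thesis
    unfolding CirAut_def inner_ZP_def transl_def by (simp add: sum_periodic_window)
qed

lemma convolution_finite_support_fold:
  fixes z :: "int \<Rightarrow> complex" and m p :: int
  assumes supp: "\<And>q. z q \<noteq> 0 \<Longrightarrow> 0 \<le> q \<and> q \<le> m - 1"
    and "0 \<le> p"
  shows "(\<Sum>q\<in>{0..p}. z q * cnj (z (p - q))) =
    of_real (2 * Re (\<Sum>q\<in>{p div 2 + 1..m - 1}. z q * cnj (z (p - q))))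
    + (if even p then of_real ((cmod (z (p div 2)))\<^sup>2) else 0)"
proof -
  define f where "f q = z q * cnj (z (p - q))" for q
  have z0: "z q = 0" if "q < 0 \<or> m - 1 < q" for q
    using supp that by force
  have "(\<Sum>q\<in>{0..p}. f q) = (\<Sum>q\<in>{p div 2 + 1..p}. f q + cnj (f q)) + (if even p then f (p div 2) else 0)"
    using assms sum_atLeastAtMost_reflect_pairs[of p f] unfolding f_def by (simp add: mult.commute)
  also have "(\<Sum>q\<in>{p div 2 + 1..p}. f q + cnj (f q)) = (\<Sum>q\<in>{p div 2 + 1..m - 1}. f q + cnj (f q))"
    by (rule sum_eq_if_vanishes_outside[where S = "{p div 2 + 1..min p (m - 1)}"])
      (use z0 in \<open>auto simp: f_def\<close>)
  also have "\<dots> = of_real (2 * Re (\<Sum>q\<in>{p div 2 + 1..m - 1}. f q))"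
    by (subst sum.distrib) (simp only: cnj_sum[symmetric] complex_add_cnj)
  also have "(if even p then f (p div 2) else 0) = (if even p then of_real ((cmod (z (p div 2)))\<^sup>2) else 0)"
    by (auto simp: f_def complex_norm_square[symmetric] simp del: of_real_power elim!: evenE)
  finally show ?thesis
    unfolding f_def .
qed

lemma autocorr_add_reversal_finite_support:
  fixes z :: "int \<Rightarrow> complex" and m p :: int
  assumes supp: "\<And>q. z q \<noteq> 0 \<Longrightarrow> 0 \<le> q \<and> q \<le> m - 1"
    and p: "1 \<le> p" "p \<le> 2 * m - 2"
  shows "(\<Sum>q\<in>{-(2*m-2)..2*m-2}. (z q + z (-q)) * cnj (z (q - p) + z (p - q))) =
    of_real (2 * Re (\<Sum>a\<in>{p div 2 + 1..m - 1}. z a * (cnj (z (a - p)) + cnj (z (p - a)))))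
    + (if even p then of_real ((cmod (z (p div 2)))\<^sup>2) else 0)"
proof -
  define W where "W = {-(2*m-2)..2*m-2}"
  define lo where "lo = p div 2 + 1"
  define A where "A = (\<Sum>q\<in>W. z q * cnj (z (q - p)))"
  have z0: "z q = 0" if "q < 0 \<or> m - 1 < q" for q
    using supp that by force
  have A: "A = (\<Sum>q\<in>{lo..m - 1}. z q * cnj (z (q - p)))"
    unfolding A_def W_def lo_def
    by (rule sum_eq_if_vanishes_outside[where S = "{p..m - 1}"]) (use p z0 in auto)
  have "(\<Sum>q\<in>W. z (-q) * cnj (z (p - q))) = (\<Sum>r\<in>{p - (2*m-2)..p + (2*m-2)}. z (r - p) * cnj (z r))"
    unfolding W_def by (subst sum_reflect_atLeastAtMost[where p = p]) simp
  also have "\<dots> = (\<Sum>r\<in>W. z (r - p) * cnj (z r))"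
    unfolding W_def
    by (rule sum_eq_if_vanishes_outside[where S = "{0..m - 1}"]) (use p z0 in auto)
  also have "\<dots> = cnj A"
    unfolding A_def by (simp add: mult.commute)
  finally have mirror: "(\<Sum>q\<in>W. z (-q) * cnj (z (p - q))) = cnj A" .
  have cross: "(\<Sum>q\<in>W. z (-q) * cnj (z (q - p))) = 0"
  proof (intro sum.neutral ballI)
    show "z (-q) * cnj (z (q - p)) = 0" for q
      using z0[of "-q"] z0[of "q - p"] p by (cases "q \<le> 0") auto
  qed
  have conv: "(\<Sum>q\<in>W. z q * cnj (z (p - q))) =
      of_real (2 * Re (\<Sum>q\<in>{lo..m - 1}. z q * cnj (z (p - q))))
      + (if even p then of_real ((cmod (z (p div 2)))\<^sup>2) else 0)"
  proof -
    have "(\<Sum>q\<in>W. z q * cnj (z (p - q))) = (\<Sum>q\<in>{0..p}. z q * cnj (z (p - q)))"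
      unfolding W_def
      by (rule sum_eq_if_vanishes_outside[where S = "{0..p}"]) (use p z0 in auto)
    then show ?thesis
      using convolution_finite_support_fold[OF supp] p unfolding lo_def by simp
  qed
  have "(\<Sum>q\<in>W. (z q + z (-q)) * cnj (z (q - p) + z (p - q))) =
      A + (\<Sum>q\<in>W. z (-q) * cnj (z (p - q))) + (\<Sum>q\<in>W. z q * cnj (z (p - q)))
      + (\<Sum>q\<in>W. z (-q) * cnj (z (q - p)))"
    unfolding A_def by (simp add: sum.distrib[symmetric] algebra_simps)
  also have "\<dots> = of_real (2 * Re (A + (\<Sum>q\<in>{lo..m - 1}. z q * cnj (z (p - q)))))
      + (if even p then of_real ((cmod (z (p div 2)))\<^sup>2) else 0)"
    unfolding mirror conv cross complex_add_cnj by simp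
  also have "A + (\<Sum>q\<in>{lo..m - 1}. z q * cnj (z (p - q))) =
      (\<Sum>a\<in>{lo..m - 1}. z a * (cnj (z (a - p)) + cnj (z (p - a))))"
    unfolding A by (simp add: sum.distrib distrib_left)
  finally show ?thesis
    unfolding W_def lo_def .
qed

lemma periodic_vanishing_block_near_origin:
  assumes periodic: "periodic_fun (4 * M - 3) x"
    and block: "\<forall>p \<in> {int M .. 4 * int M - 4}. x p = 0"
    and "M \<ge> 1" "\<bar>q\<bar> \<le> 3 * int M - 3" "\<not> (0 \<le> q \<and> q \<le> int M - 1)"
  shows "x q = 0"
proof (cases "q < 0")
  case True
  have "int (4 * M - 3) = 4 * int M - 3"
    using \<open>M \<ge> 1\<close> by simp
  then have "x q = x (q + (4 * int M - 3))"
    using periodic unfolding periodic_fun_def by metis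
  also have "\<dots> = 0"
    using block True assms(4) by auto
  finally show ?thesis .
qed (use block assms(4,5) in auto)

lemma add_reversal_term_eq_truncation:
  fixes x z :: "int \<Rightarrow> complex" and m p q :: int
  assumes agree: "\<And>q. \<bar>q\<bar> \<le> 3 * m - 3 \<Longrightarrow> x q = z q"
    and supp: "\<And>q. z q \<noteq> 0 \<Longrightarrow> 0 \<le> q \<and> q \<le> m - 1"
    and p: "1 \<le> p" "p \<le> 2 * m - 2" and q: "\<bar>q\<bar> \<le> 2 * m - 2"
  shows "(x q + x (-q)) * cnj (x (q - p) + x (p - q)) = (z q + z (-q)) * cnj (z (q - p) + z (p - q))"
proof -
  have "x q = z q" "x (-q) = z (-q)"
    using q by (auto intro!: agree)
  moreover have "x (q - p) = z (q - p)" "x (p - q) = z (p - q)" if "z q + z (-q) \<noteq> 0"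
  proof -
    have "\<bar>q\<bar> \<le> m - 1"
      using that supp[of q] supp[of "-q"] by force
    then show "x (q - p) = z (q - p)" "x (p - q) = z (p - q)"
      using p by (auto intro!: agree)
  qed
  ultimately show ?thesis
    by (cases "z q + z (-q) = 0") auto
qed

lemma CirAut_add_reversal_vanishing_block:
  fixes M :: nat and x :: "int \<Rightarrow> complex" and p :: int
  assumes "M \<ge> 1"
    and "periodic_fun (4 * M - 3) x"
    and "\<forall>p \<in> {int M .. 4 * int M - 4}. x p = 0"
    and p: "1 \<le> p" "p \<le> 2 * int M - 2"
  shows "CirAut (4 * M - 3) (\<lambda>q. x q + reversal x q) p =
    of_real (2 * Re (\<Sum>a\<in>{p div 2 + 1..int M - 1}. x a * (cnj (x (a - p)) + cnj (x (p - a)))))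
    + (if even p then of_real ((cmod (x (p div 2)))\<^sup>2) else 0)"
proof -
  define N where "N = 2 * int M - 2"
  define z where "z q = (if 0 \<le> q \<and> q \<le> int M - 1 then x q else 0)" for q
  have supp: "z q \<noteq> 0 \<Longrightarrow> 0 \<le> q \<and> q \<le> int M - 1" for q
    unfolding z_def by (auto split: if_splits)
  have agree: "x q = z q" if "\<bar>q\<bar> \<le> 3 * int M - 3" for q
    using periodic_vanishing_block_near_origin[OF assms(2,3,1) that] unfolding z_def by auto
  have window: "{-N..<-N + int (4 * M - 3)} = {-N..N}"
    using assms(1) unfolding N_def by auto
  have "CirAut (4 * M - 3) (\<lambda>q. x q + reversal x q) p =
      (\<Sum>q\<in>{-N..N}. (x q + x (-q)) * cnj (x (q - p) + x (p - q)))"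
    using CirAut_eq_window_sum[OF periodic_fun_add_reversal[OF assms(2)], of p "-N"]
    unfolding window by (simp add: reversal_def)
  also have "\<dots> = (\<Sum>q\<in>{-N..N}. (z q + z (-q)) * cnj (z (q - p) + z (p - q)))"
    by (intro sum.cong refl add_reversal_term_eq_truncation[OF agree supp p]) (auto simp: N_def)
  also have "\<dots> = of_real (2 * Re (\<Sum>a\<in>{p div 2 + 1..int M - 1}. z a * (cnj (z (a - p)) + cnj (z (p - a)))))
      + (if even p then of_real ((cmod (z (p div 2)))\<^sup>2) else 0)"
    unfolding N_def by (rule autocorr_add_reversal_finite_support[OF supp p])
  also have "(\<Sum>a\<in>{p div 2 + 1..int M - 1}. z a * (cnj (z (a - p)) + cnj (z (p - a)))) =
      (\<Sum>a\<in>{p div 2 + 1..int M - 1}. x a * (cnj (x (a - p)) + cnj (x (p - a))))"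
    using p by (intro sum.cong) (auto simp: agree)
  also have "z (p div 2) = x (p div 2)"
    using p by (intro agree[symmetric]) auto
  finally show ?thesis .
qed

theorem theorem2:
  fixes M :: nat and x :: "int \<Rightarrow> complex"
  assumes "M \<ge> 1"
    and "periodic_fun (4 * M - 3) x"
    and "\<forall>p \<in> {int M .. 4 * int M - 4}. x p = 0"
  shows "\<forall>p \<in> {1 .. 2 * int M - 2}.
     CirAut (4 * M - 3) (\<lambda>q. x q + reversal x q) p =
       (if odd p
        then complex_of_real (2 * Re (\<Sum>p'\<in>{(p + 1) div 2 .. int M - 1}.
                x p' * (cnj (x (p' - p)) + cnj (x (p - p')))))
        else complex_of_real (2 * Re (\<Sum>p'\<in>{p div 2 + 1 .. int M - 1}.
                x p' * (cnj (x (p' - p)) + cnj (x (p - p')))))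
             + complex_of_real ((cmod (x (p div 2)))\<^sup>2))"
proof -
  have "(p + 1) div 2 = p div 2 + 1" if "odd p" for p :: int
    using that by presburger
  then show ?thesis
    using CirAut_add_reversal_vanishing_block[OF assms] by auto
qed

end
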